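(* Let $f:\mathbb{R}^d\to\mathbb{R}$ be $\mu$-strongly convex and $L$-smooth (i.e. $\nabla f$ is $L$-Lipschitz), with minimum value $f_\ast$. Let $\theta_0\in\mathbb{R}^d$ be fixed and define iterates $\theta_{t+1}=\theta_t-\alpha\,(\gamma_t\odot g_t)$ with $\alpha=1/L$, where $g_t$ is a random vector satisfying, conditionally on the history $\theta_0,\dots,\theta_t$, $\mathbf{E}[g_t\mid\theta_t]=\nabla f(\theta_t)$ and $\mathbf{var}[g_{t,i}\mid\theta_t]=\sigma_{t,i}^2<\infty$, and where the (idealized) variance adaptation factors are $$\gamma_{t,i}=\frac{\nabla f(\theta_t)_i^2}{\nabla f(\theta_t)_i^2+\sigma_{t,i}^2}$$ (with $\gamma_{t,i}:=0$ if the denominator vanishes). Assume there are constants $c_v,M_v>0$ such that for all $t$, $\sum_{i=1}^d\sigma_{t,i}^2\le c_v\|\nabla f(\theta_t)\|^2+M_v$. Then $\mathbf{E}[f(\theta_t)-f_\ast]\in\mathcal{O}(1/t)$ as $t\to\infty$.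
   Context: $\odot$ denotes element-wise multiplication; $\|\cdot\|$ is the Euclidean norm; $x_i$ denotes the $i$-th coordinate of a vector $x$. *)

theory Defs
  imports "HOL-Probability.Probability" "HOL-Library.Landau_Symbols"
begin

definition strongly_convex :: "real \<Rightarrow> ('v::real_normed_vector \<Rightarrow> real) \<Rightarrow> bool" where
  "strongly_convex \<mu> f \<longleftrightarrow>
     (\<forall>x y u. 0 \<le> u \<longrightarrow> u \<le> 1 \<longrightarrow>
        f (u *\<^sub>R x + (1 - u) *\<^sub>R y) \<le> u * f x + (1 - u) * f y - \<mu> / 2 * u * (1 - u) * (norm (x - y))\<^sup>2)"

definition vadapt :: "real \<Rightarrow> real \<Rightarrow> real" where
  "vadapt a s = (if a\<^sup>2 + s = 0 then 0 else a\<^sup>2 / (a\<^sup>2 + s))"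

definition hist_alg :: "'a measure \<Rightarrow> (nat \<Rightarrow> 'a \<Rightarrow> 'b::topological_space) \<Rightarrow> nat \<Rightarrow> 'a measure" where
  "hist_alg M X t = sigma (space M) (\<Union>s\<in>{..t}. {X s -` B \<inter> space M | B. B \<in> sets borel})"

end

theory Submission
  imports Defs
begin

(*
  With step 1/L, the descent lemma for L-smooth f gives
    f(theta_{t+1}) <= f(theta_t) - <grad f, gamma * g>/L + |gamma * g|^2/(2L).
  Conditionally on the history, unbiasedness turns the first-order term into
  sum_i gamma_i grad_i^2, and the bias-variance decomposition turns the second-order term into
  sum_i gamma_i^2 (grad_i^2 + sigma_i^2), which for the idealized factors is the same sum.
  Hence the expected gap e_t = E[f(theta_t) - f_*] drops by E[sum_i gamma_i grad_i^2]/(2L).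
  As gamma_i grad_i^2 dominates 2 l grad_i^2 - l^2 (grad_i^2 + sigma_i^2) for every l, the
  variance bound and the Polyak-Lojasiewicz inequality |grad f|^2 >= 2 mu (f - f_* ) yield
    e_{t+1} <= (1 - mu l / L) e_t + M_v l^2 / (2L)   for all 0 <= l <= 1/(1 + c_v),
  and the step sizes l ~ 2L/(mu t) give e_t = O(1/t).
*)

lemma abs_mult_le_sum_squares:
  fixes a b :: real
  shows "\<bar>a * b\<bar> \<le> a\<^sup>2 + b\<^sup>2"
proof -
  have "2 * \<bar>a\<bar> * \<bar>b\<bar> \<le> a\<^sup>2 + b\<^sup>2" using sum_squares_bound[of "\<bar>a\<bar>" "\<bar>b\<bar>"] by simp
  moreover have "0 \<le> \<bar>a\<bar> * \<bar>b\<bar>" by simp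
  ultimately show ?thesis unfolding abs_mult by linarith
qed

lemma power2_le_twice_sum_squares:
  fixes u a b :: real
  assumes "0 \<le> u" "u \<le> a + b"
  shows "u\<^sup>2 \<le> 2 * a\<^sup>2 + 2 * b\<^sup>2"
proof -
  have "u\<^sup>2 \<le> (a + b)\<^sup>2" using assms by (intro power_mono) auto
  also have "\<dots> \<le> 2 * a\<^sup>2 + 2 * b\<^sup>2"
    using sum_squares_bound[of a b] by (simp add: power2_sum)
  finally show ?thesis .
qed

lemma norm_vec_sq: "(norm (x :: real^'n))\<^sup>2 = (\<Sum>i\<in>UNIV. (x $ i)\<^sup>2)"
  by (simp only: power2_norm_eq_inner inner_vec_def) (simp add: power2_eq_square)

section \<open>Smooth and strongly convex functions\<close>

lemma has_real_derivative_along_line: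
  fixes f :: "'v::real_inner \<Rightarrow> real"
  assumes grad: "\<And>x. (f has_derivative (\<lambda>h. Df x \<bullet> h)) (at x)"
  shows "((\<lambda>s. f (x + s *\<^sub>R h)) has_real_derivative (Df (x + s *\<^sub>R h) \<bullet> h)) (at s)"
proof -
  have "((\<lambda>s. x + s *\<^sub>R h) has_derivative (\<lambda>d. d *\<^sub>R h)) (at s)"
    by (auto intro!: derivative_eq_intros)
  from has_derivative_compose[OF this grad]
  have "((\<lambda>s. f (x + s *\<^sub>R h)) has_derivative (\<lambda>d. Df (x + s *\<^sub>R h) \<bullet> (d *\<^sub>R h))) (at s)" .
  moreover have "(\<lambda>d. Df (x + s *\<^sub>R h) \<bullet> (d *\<^sub>R h)) = (*) (Df (x + s *\<^sub>R h) \<bullet> h)"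
    by (auto simp: inner_scaleR_right)
  ultimately show ?thesis unfolding has_field_derivative_def by simp
qed

lemma lipschitz_gradient_upper_bound:
  fixes f :: "'v::real_inner \<Rightarrow> real"
  assumes grad: "\<And>x. (f has_derivative (\<lambda>h. Df x \<bullet> h)) (at x)"
    and smooth: "\<And>x y. norm (Df x - Df y) \<le> L * norm (x - y)"
  shows "f y \<le> f x + Df x \<bullet> (y - x) + L / 2 * (norm (y - x))\<^sup>2"
proof -
  define h where "h = y - x"
  define \<psi> where "\<psi> s = f (x + s *\<^sub>R h) - s * (Df x \<bullet> h) - L / 2 * s\<^sup>2 * (norm h)\<^sup>2" for s
  have \<psi>': "(\<psi> has_real_derivative (Df (x + s *\<^sub>R h) \<bullet> h - Df x \<bullet> h - L * s * (norm h)\<^sup>2)) (at s)" for s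
    unfolding \<psi>_def
    by (rule derivative_eq_intros has_real_derivative_along_line[OF grad] refl | simp)+
  have "\<psi> 1 \<le> \<psi> 0"
  proof (rule DERIV_nonpos_imp_nonincreasing[of 0 1])
    fix s :: real assume s: "0 \<le> s" "s \<le> 1"
    have "Df (x + s *\<^sub>R h) \<bullet> h - Df x \<bullet> h \<le> norm (Df (x + s *\<^sub>R h) - Df x) * norm h"
      by (metis inner_diff_left norm_cauchy_schwarz)
    also have "\<dots> \<le> L * norm (s *\<^sub>R h) * norm h"
      using smooth[of "x + s *\<^sub>R h" x] by (simp add: mult_right_mono)
    also have "\<dots> = L * s * (norm h)\<^sup>2" using s by (simp add: power2_eq_square)
    finally show "\<exists>y. (\<psi> has_real_derivative y) (at s) \<and> y \<le> 0"
      using \<psi>' by fastforce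
  qed simp
  then show ?thesis unfolding \<psi>_def h_def by simp
qed

lemma gradient_step_upper_bound:
  fixes f :: "'v::real_inner \<Rightarrow> real"
  assumes grad: "\<And>x. (f has_derivative (\<lambda>h. Df x \<bullet> h)) (at x)"
    and smooth: "\<And>x y. norm (Df x - Df y) \<le> L * norm (x - y)"
    and "L > 0"
  shows "f (x - (1 / L) *\<^sub>R w) \<le> f x - (Df x \<bullet> w) / L + (norm w)\<^sup>2 / (2 * L)"
proof -
  have "f (x - (1 / L) *\<^sub>R w) \<le> f x + Df x \<bullet> (- ((1 / L) *\<^sub>R w)) + L / 2 * (norm (- ((1 / L) *\<^sub>R w)))\<^sup>2"
    using lipschitz_gradient_upper_bound[OF grad smooth, of "x - (1 / L) *\<^sub>R w" x] by simp
  also have "\<dots> = f x - (Df x \<bullet> w) / L + (norm w)\<^sup>2 / (2 * L)"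
    using \<open>L > 0\<close> by (simp add: power_divide power2_eq_square)
  finally show ?thesis .
qed

lemma lipschitz_gradient_quadratic_growth:
  fixes f :: "'v::real_inner \<Rightarrow> real"
  assumes grad: "\<And>x. (f has_derivative (\<lambda>h. Df x \<bullet> h)) (at x)"
    and smooth: "\<And>x y. norm (Df x - Df y) \<le> L * norm (x - y)"
  shows "f y \<le> f 0 + (norm (Df 0))\<^sup>2 + (L / 2 + 1) * (norm y)\<^sup>2"
proof -
  have "Df 0 \<bullet> y \<le> norm (Df 0) * norm y" by (rule norm_cauchy_schwarz)
  also have "\<dots> \<le> (norm (Df 0))\<^sup>2 + (norm y)\<^sup>2"
    using abs_mult_le_sum_squares[of "norm (Df 0)" "norm y"] by simp
  finally show ?thesis
    using lipschitz_gradient_upper_bound[OF grad smooth, of y 0] by (simp add: algebra_simps)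
qed

lemma strongly_convex_lower_bound:
  fixes f :: "'v::real_inner \<Rightarrow> real"
  assumes grad: "\<And>x. (f has_derivative (\<lambda>h. Df x \<bullet> h)) (at x)"
    and sconv: "strongly_convex \<mu> f"
  shows "f x + Df x \<bullet> (y - x) + \<mu> / 2 * (norm (y - x))\<^sup>2 \<le> f y"
proof -
  define h where "h = y - x"
  have "((\<lambda>s. f (x + s *\<^sub>R h)) has_real_derivative (Df x \<bullet> h)) (at 0)"
    using has_real_derivative_along_line[OF grad, of x h 0] by simp
  then have lim: "((\<lambda>u. (f (x + u *\<^sub>R h) - f x) / u) \<longlongrightarrow> Df x \<bullet> h) (at_right 0)"
    unfolding has_field_derivative_iff by (auto intro: tendsto_mono at_le)
  have lim': "((\<lambda>u. f y - f x - \<mu> / 2 * (1 - u) * (norm h)\<^sup>2) \<longlongrightarrow> f y - f x - \<mu> / 2 * (1 - 0) * (norm h)\<^sup>2) (at_right 0)"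
    by (intro tendsto_intros)
  have "\<forall>\<^sub>F u in at_right 0. (f (x + u *\<^sub>R h) - f x) / u \<le> f y - f x - \<mu> / 2 * (1 - u) * (norm h)\<^sup>2"
  proof (rule eventually_mono[OF eventually_at_right_real[of 0 1]])
    fix u :: real assume "u \<in> {0<..<1}"
    then have u: "0 < u" "u < 1" by auto
    have "u *\<^sub>R y + (1 - u) *\<^sub>R x = x + u *\<^sub>R h" unfolding h_def by (simp add: algebra_simps)
    moreover have "f (u *\<^sub>R y + (1 - u) *\<^sub>R x) \<le> u * f y + (1 - u) * f x - \<mu> / 2 * u * (1 - u) * (norm h)\<^sup>2"
      using sconv u unfolding strongly_convex_def h_def by simp
    ultimately have "f (x + u *\<^sub>R h) - f x \<le> u * (f y - f x - \<mu> / 2 * (1 - u) * (norm h)\<^sup>2)"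
      by (simp add: algebra_simps)
    then show "(f (x + u *\<^sub>R h) - f x) / u \<le> f y - f x - \<mu> / 2 * (1 - u) * (norm h)\<^sup>2"
      using u by (simp add: divide_le_eq mult.commute)
  qed simp
  from tendsto_le[OF trivial_limit_at_right_real lim' lim this]
  show ?thesis unfolding h_def by simp
qed

lemma strongly_convex_gradient_bound:
  fixes f :: "'v::real_inner \<Rightarrow> real"
  assumes grad: "\<And>x. (f has_derivative (\<lambda>h. Df x \<bullet> h)) (at x)"
    and sconv: "strongly_convex \<mu> f" and "\<mu> > 0"
  shows "f x - (norm (Df x))\<^sup>2 / (2 * \<mu>) \<le> f y"
proof -
  define a r where "a = norm (Df x)" and "r = norm (y - x)"
  have "- (Df x \<bullet> (y - x)) \<le> a * r"
    using norm_cauchy_schwarz[of "- Df x" "y - x"] by (simp add: a_def r_def)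
  moreover have "a * r - \<mu> / 2 * r\<^sup>2 = a\<^sup>2 / (2 * \<mu>) - (\<mu> * r - a)\<^sup>2 / (2 * \<mu>)"
    using \<open>\<mu> > 0\<close> by (simp add: field_simps power2_eq_square)
  moreover have "0 \<le> (\<mu> * r - a)\<^sup>2 / (2 * \<mu>)" using \<open>\<mu> > 0\<close> by simp
  ultimately show ?thesis
    using strongly_convex_lower_bound[OF grad sconv, of x y] unfolding a_def r_def by linarith
qed

lemma strongly_convex_bdd_below:
  fixes f :: "'v::real_inner \<Rightarrow> real"
  assumes grad: "\<And>x. (f has_derivative (\<lambda>h. Df x \<bullet> h)) (at x)"
    and sconv: "strongly_convex \<mu> f" and "\<mu> > 0"
  shows "bdd_below (range f)"
  using strongly_convex_gradient_bound[OF assms, of 0] by (intro bdd_belowI2) blast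

lemma strongly_convex_Polyak_Lojasiewicz:
  fixes f :: "'v::real_inner \<Rightarrow> real"
  assumes grad: "\<And>x. (f has_derivative (\<lambda>h. Df x \<bullet> h)) (at x)"
    and sconv: "strongly_convex \<mu> f" and "\<mu> > 0"
  shows "f x - (INF y. f y) \<le> (norm (Df x))\<^sup>2 / (2 * \<mu>)"
proof -
  have "f x - (norm (Df x))\<^sup>2 / (2 * \<mu>) \<le> (INF y. f y)"
    using strongly_convex_gradient_bound[OF assms] by (intro cINF_greatest) auto
  then show ?thesis by simp
qed

section \<open>The idealized variance adaptation factor\<close>

text \<open>The case distinction in the definition of \<open>vadapt\<close> is redundant, as \<open>x / 0 = 0\<close>.\<close>
lemma vadapt_eq_divide: "vadapt a s = a\<^sup>2 / (a\<^sup>2 + s)"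
  by (simp add: vadapt_def)

lemma vadapt_nonneg: "0 \<le> s \<Longrightarrow> 0 \<le> vadapt a s"
  by (simp add: vadapt_eq_divide)

lemma vadapt_le_one:
  assumes "0 \<le> s"
  shows "vadapt a s \<le> 1"
proof (cases "a\<^sup>2 + s = 0")
  case False
  then have "a\<^sup>2 + s > 0" using assms by (simp add: add_nonneg_pos order_le_neq_trans)
  then show ?thesis using assms by (simp add: vadapt_eq_divide)
qed (simp add: vadapt_eq_divide)

lemma vadapt_sq_mult: "(vadapt a s)\<^sup>2 * (a\<^sup>2 + s) = vadapt a s * a\<^sup>2"
  by (cases "a\<^sup>2 + s = 0") (auto simp: vadapt_eq_divide power2_eq_square)

text \<open>The idealized factor is the maximiser over l of \<open>2 l a\<^sup>2 - l\<^sup>2 (a\<^sup>2 + s)\<close>, the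
  first-order decrease of a step of size l minus its second-order cost.\<close>
lemma vadapt_lower_bound:
  assumes "0 \<le> s"
  shows "2 * l * a\<^sup>2 - l\<^sup>2 * (a\<^sup>2 + s) \<le> vadapt a s * a\<^sup>2"
proof (cases "a\<^sup>2 + s = 0")
  case True
  then show ?thesis using assms by (auto simp: add_nonneg_eq_0_iff)
next
  case False
  then have pos: "a\<^sup>2 + s > 0" using assms by (simp add: add_nonneg_pos order_le_neq_trans)
  have "0 \<le> (a\<^sup>2 - l * (a\<^sup>2 + s))\<^sup>2 / (a\<^sup>2 + s)" using pos by simp
  also have "\<dots> = vadapt a s * a\<^sup>2 - (2 * l * a\<^sup>2 - l\<^sup>2 * (a\<^sup>2 + s))"
    using pos by (simp add: vadapt_eq_divide field_simps power2_eq_square)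
  finally show ?thesis by simp
qed

lemma sum_vadapt_lower_bound:
  fixes a s :: "real^'n"
  assumes s: "\<And>i. 0 \<le> s $ i" "(\<Sum>i\<in>UNIV. s $ i) \<le> cv * (norm a)\<^sup>2 + Mv"
    and l: "0 \<le> l" "l * (1 + cv) \<le> 1"
  shows "l * (norm a)\<^sup>2 - l\<^sup>2 * Mv \<le> (\<Sum>i\<in>UNIV. vadapt (a $ i) (s $ i) * (a $ i)\<^sup>2)"
proof -
  define N S where "N = (norm a)\<^sup>2" and "S = (\<Sum>i\<in>UNIV. s $ i)"
  have "2 * l * N - l\<^sup>2 * N - l\<^sup>2 * S = (\<Sum>i\<in>UNIV. 2 * l * (a $ i)\<^sup>2 - l\<^sup>2 * ((a $ i)\<^sup>2 + s $ i))"
    unfolding N_def S_def norm_vec_sq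
    by (simp add: sum_subtractf sum.distrib sum_distrib_left sum_distrib_right algebra_simps)
  also have "\<dots> \<le> (\<Sum>i\<in>UNIV. vadapt (a $ i) (s $ i) * (a $ i)\<^sup>2)"
    by (intro sum_mono vadapt_lower_bound s)
  finally have "2 * l * N - l\<^sup>2 * N - l\<^sup>2 * S \<le> (\<Sum>i\<in>UNIV. vadapt (a $ i) (s $ i) * (a $ i)\<^sup>2)" .
  moreover have "l\<^sup>2 * S \<le> l\<^sup>2 * (cv * N + Mv)"
    using s(2) by (intro mult_left_mono) (simp_all add: N_def S_def)
  moreover have "l * (l * (1 + cv)) * N \<le> l * 1 * N"
    using l by (intro mult_right_mono mult_left_mono) (simp_all add: N_def)
  ultimately show ?thesis
    unfolding N_def[symmetric] by (simp add: power2_eq_square algebra_simps)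
qed

section \<open>Perturbed contraction recursions\<close>

lemma contraction_recursion_inverse_bound:
  fixes e :: "nat \<Rightarrow> real"
  assumes c: "c > 0" and lmax: "lmax > 0" and T: "T \<ge> 2" "2 / c \<le> T * lmax"
    and C: "e 0 * T \<le> C" "K * (2 / c)\<^sup>2 \<le> C" "0 \<le> C"
    and rec: "\<And>t l. 0 \<le> l \<Longrightarrow> l \<le> lmax \<Longrightarrow> e (Suc t) \<le> (1 - c * l) * e t + K * l\<^sup>2"
  shows "e t \<le> C / (real t + T)"
proof (induction t)
  case 0
  then show ?case using T C by (simp add: field_simps)
next
  case (Suc t)
  define s where "s = real t + T"
  have s: "s \<ge> 2" using T by (simp add: s_def)
  \<comment> \<open>the step size \<open>2 / (c (t + T))\<close> keeps the bound \<open>C / (t + T)\<close> invariant\<close>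
  define l where "l = 2 / (c * s)"
  have l: "0 \<le> l" "l \<le> lmax"
  proof -
    show "0 \<le> l" using c s by (simp add: l_def)
    have "l = (2 / c) / s" using c by (simp add: l_def)
    also have "\<dots> \<le> (T * lmax) / s" using s by (intro divide_right_mono T(2)) simp
    also have "\<dots> \<le> lmax" using s T lmax by (simp add: s_def field_simps)
    finally show "l \<le> lmax" .
  qed
  have "e (Suc t) \<le> (1 - 2 / s) * e t + K * (2 / c)\<^sup>2 / s\<^sup>2"
    using rec[OF l, of t] c s by (simp add: l_def power_divide power_mult_distrib)
  also have "\<dots> \<le> (1 - 2 / s) * (C / s) + C / s\<^sup>2"
    using Suc.IH C(2) s by (intro add_mono mult_left_mono divide_right_mono) (simp_all add: s_def field_simps)
  also have "\<dots> = C / s - C / s\<^sup>2" using s by (simp add: field_simps power2_eq_square)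
  also have "\<dots> \<le> C / (s + 1)"
  proof -
    have "C / s - C / (s + 1) = C / (s * (s + 1))" using s by (simp add: field_simps)
    also have "\<dots> \<le> C / s\<^sup>2" using s C(3) by (intro divide_left_mono) (auto simp: power2_eq_square)
    finally show ?thesis by simp
  qed
  finally show ?case by (simp add: s_def add_ac)
qed

lemma contraction_recursion_bigo:
  fixes e :: "nat \<Rightarrow> real"
  assumes nonneg: "\<And>t. 0 \<le> e t" and c: "c > 0" and K: "K \<ge> 0" and lmax: "lmax > 0"
    and rec: "\<And>t l. 0 \<le> l \<Longrightarrow> l \<le> lmax \<Longrightarrow> e (Suc t) \<le> (1 - c * l) * e t + K * l\<^sup>2"
  shows "e \<in> O(\<lambda>t. 1 / real t)"
proof -
  define T where "T = max 2 (2 / (c * lmax))"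
  define C where "C = max (e 0 * T) (K * (2 / c)\<^sup>2)"
  have T: "T \<ge> 2" "2 / c \<le> T * lmax"
  proof -
    show "T \<ge> 2" by (simp add: T_def)
    have "2 / c = 2 / (c * lmax) * lmax" using lmax by simp
    also have "\<dots> \<le> T * lmax" using lmax by (intro mult_right_mono) (simp_all add: T_def)
    finally show "2 / c \<le> T * lmax" .
  qed
  have C: "e 0 * T \<le> C" "K * (2 / c)\<^sup>2 \<le> C" "0 \<le> C"
    using nonneg[of 0] T by (auto simp: C_def intro: order.trans[OF _ max.cobounded1])
  have "norm (e t) \<le> C * norm (1 / real t)" if "t \<ge> 1" for t
  proof -
    have "norm (e t) \<le> C / (real t + T)"
      using contraction_recursion_inverse_bound[OF c lmax T C rec] nonneg[of t] by simp
    also have "\<dots> \<le> C / real t" using that T C by (intro divide_left_mono) auto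
    finally show ?thesis by simp
  qed
  then show ?thesis by (intro bigoI[where c = C] eventually_mono[OF eventually_ge_at_top[of 1]])
qed

section \<open>History sigma-algebras and conditional expectations\<close>

lemma borel_measurable_vec_nth [measurable (raw)]:
  fixes f :: "'a \<Rightarrow> real^'n"
  assumes "f \<in> borel_measurable M"
  shows "(\<lambda>x. f x $ i) \<in> borel_measurable M"
  using borel_measurable_inner[OF assms borel_measurable_const[of "axis i 1"]]
  by (simp add: cart_eq_inner_axis)

lemma borel_measurable_vec_lambda:
  fixes h :: "'a \<Rightarrow> 'n::finite \<Rightarrow> real"
  assumes "\<And>i. (\<lambda>x. h x i) \<in> borel_measurable M"
  shows "(\<lambda>x. \<chi> i. h x i) \<in> borel_measurable M"
proof (rule borel_measurable_euclidean_space[THEN iffD2], intro ballI)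
  fix b :: "real^'n" assume "b \<in> Basis"
  then obtain i where "b = axis i 1" unfolding Basis_vec_def by auto
  then show "(\<lambda>x. (\<chi> i. h x i) \<bullet> b) \<in> borel_measurable M"
    using assms[of i] by (simp add: cart_eq_inner_axis[symmetric])
qed

lemma space_hist_alg [simp]: "space (hist_alg M X t) = space M"
  unfolding hist_alg_def by (simp add: space_measure_of_conv)

lemma sets_hist_alg:
  "sets (hist_alg M X t) = sigma_sets (space M) (\<Union>s\<in>{..t}. {X s -` B \<inter> space M | B. B \<in> sets borel})"
  unfolding hist_alg_def by (rule sets_measure_of) auto

lemma subalgebra_hist_alg:
  assumes "\<And>s. s \<le> t \<Longrightarrow> X s \<in> borel_measurable M"
  shows "subalgebra M (hist_alg M X t)"
  unfolding subalgebra_def sets_hist_alg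
  using assms by (auto intro!: sets.sigma_sets_subset measurable_sets)

lemma measurable_hist_alg:
  assumes "s \<le> t"
  shows "X s \<in> borel_measurable (hist_alg M X t)"
proof (rule measurableI)
  fix B :: "'b set" assume "B \<in> sets borel"
  then show "X s -` B \<inter> space (hist_alg M X t) \<in> sets (hist_alg M X t)"
    unfolding sets_hist_alg using assms by (auto intro: sigma_sets.Basic)
qed simp

lemma integrable_mult_bounded:
  fixes h \<gamma> :: "'a \<Rightarrow> real"
  assumes "integrable M h" "\<gamma> \<in> borel_measurable M" "AE x in M. \<bar>\<gamma> x\<bar> \<le> 1"
  shows "integrable M (\<lambda>x. \<gamma> x * h x)"
proof (rule Bochner_Integration.integrable_bound[OF integrable_norm[OF assms(1)]])
  show "(\<lambda>x. \<gamma> x * h x) \<in> borel_measurable M"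
    using assms(1,2) by measurable
  show "AE x in M. norm (\<gamma> x * h x) \<le> norm (norm (h x))"
    using assms(3) by eventually_elim (simp add: abs_mult mult_left_le_one_le)
qed

lemma integrable_mult_of_square_integrable:
  fixes g h :: "'a \<Rightarrow> real"
  assumes "integrable M (\<lambda>x. (g x)\<^sup>2)" "integrable M (\<lambda>x. (h x)\<^sup>2)"
    and "g \<in> borel_measurable M" "h \<in> borel_measurable M"
  shows "integrable M (\<lambda>x. g x * h x)"
proof (rule Bochner_Integration.integrable_bound)
  show "integrable M (\<lambda>x. (g x)\<^sup>2 + (h x)\<^sup>2)" using assms(1,2) by simp
  show "AE x in M. norm (g x * h x) \<le> norm ((g x)\<^sup>2 + (h x)\<^sup>2)"
    by (intro AE_I2) (simp add: abs_mult_le_sum_squares)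
qed (use assms(3,4) in measurable)

context sigma_finite_subalgebra
begin

lemma integral_mult_cond_exp_unbiased:
  fixes h g d :: "'a \<Rightarrow> real"
  assumes [measurable]: "h \<in> borel_measurable F" "g \<in> borel_measurable M" "d \<in> borel_measurable M"
    and "integrable M (\<lambda>x. h x * g x)"
    and "AE x in M. real_cond_exp M F g x = d x"
  shows "integrable M (\<lambda>x. h x * d x)" "(\<integral>x. h x * g x \<partial>M) = (\<integral>x. h x * d x \<partial>M)"
proof -
  have [measurable]: "h \<in> borel_measurable M" by (rule measurable_from_subalg[OF subalg]) simp
  have eq: "AE x in M. h x * real_cond_exp M F g x = h x * d x"
    using assms(5) by eventually_elim simp
  show "integrable M (\<lambda>x. h x * d x)"
    using real_cond_exp_intg(1)[OF assms(4)] integrable_cong_AE[OF _ _ eq] by simp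
  show "(\<integral>x. h x * g x \<partial>M) = (\<integral>x. h x * d x \<partial>M)"
    using real_cond_exp_intg(2)[OF assms(4)] integral_cong_AE[OF _ _ eq] by simp
qed

lemma second_moment_cond_exp:
  fixes \<gamma> g d \<sigma> :: "'a \<Rightarrow> real"
  assumes [measurable]: "\<gamma> \<in> borel_measurable F" "d \<in> borel_measurable F"
      "g \<in> borel_measurable M" "\<sigma> \<in> borel_measurable M"
    and \<gamma>: "AE x in M. \<bar>\<gamma> x\<bar> \<le> 1"
    and sq: "integrable M (\<lambda>x. (g x)\<^sup>2)" "integrable M (\<lambda>x. (d x)\<^sup>2)"
    and unbiased: "AE x in M. real_cond_exp M F g x = d x"
    and var: "AE x in M. \<sigma> x = real_cond_exp M F (\<lambda>x. (g x - d x)\<^sup>2) x"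
  shows "integrable M (\<lambda>x. (\<gamma> x * g x)\<^sup>2)"
    "(\<integral>x. (\<gamma> x * g x)\<^sup>2 \<partial>M) = (\<integral>x. (\<gamma> x)\<^sup>2 * ((d x)\<^sup>2 + \<sigma> x) \<partial>M)"
proof -
  have [measurable]: "\<gamma> \<in> borel_measurable M" "d \<in> borel_measurable M"
    by (rule measurable_from_subalg[OF subalg], simp)+
  have \<gamma>2: "AE x in M. \<bar>(\<gamma> x)\<^sup>2\<bar> \<le> 1"
    using \<gamma> by eventually_elim (simp add: abs_square_le_1)
  have dg: "integrable M (\<lambda>x. d x * g x)"
    by (rule integrable_mult_of_square_integrable[OF sq(2,1)]) simp_all
  have "(\<lambda>x. (g x - d x)\<^sup>2) = (\<lambda>x. (g x)\<^sup>2 - 2 * (d x * g x) + (d x)\<^sup>2)"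
    by (simp add: fun_eq_iff power2_eq_square algebra_simps)
  then have "integrable M (\<lambda>x. (g x - d x)\<^sup>2)"
    using sq dg by simp
  then have int_a: "integrable M (\<lambda>x. (\<gamma> x)\<^sup>2 * (g x - d x)\<^sup>2)"
    by (rule integrable_mult_bounded[OF _ _ \<gamma>2]) simp
  have int_b: "integrable M (\<lambda>x. ((\<gamma> x)\<^sup>2 * d x) * g x)"
    using integrable_mult_bounded[OF dg _ \<gamma>2] by (simp add: mult.assoc)
  have int_c: "integrable M (\<lambda>x. (\<gamma> x)\<^sup>2 * (d x)\<^sup>2)"
    by (rule integrable_mult_bounded[OF sq(2) _ \<gamma>2]) simp
  have var': "AE x in M. real_cond_exp M F (\<lambda>x. (g x - d x)\<^sup>2) x = \<sigma> x"
    using var by eventually_elim simp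
  note a = integral_mult_cond_exp_unbiased[where h = "\<lambda>x. (\<gamma> x)\<^sup>2", OF _ _ _ int_a var']
  note b = integral_mult_cond_exp_unbiased[where h = "\<lambda>x. (\<gamma> x)\<^sup>2 * d x", OF _ _ _ int_b unbiased]
  have split: "(\<gamma> x * g x)\<^sup>2 = (\<gamma> x)\<^sup>2 * (g x - d x)\<^sup>2 + 2 * (((\<gamma> x)\<^sup>2 * d x) * g x) - (\<gamma> x)\<^sup>2 * (d x)\<^sup>2" for x
    by (simp add: power2_eq_square algebra_simps)
  show "integrable M (\<lambda>x. (\<gamma> x * g x)\<^sup>2)"
    unfolding split using int_a int_b int_c by simp
  have "(\<integral>x. (\<gamma> x * g x)\<^sup>2 \<partial>M) = (\<integral>x. (\<gamma> x)\<^sup>2 * (g x - d x)\<^sup>2 \<partial>M)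
      + 2 * (\<integral>x. ((\<gamma> x)\<^sup>2 * d x) * g x \<partial>M) - (\<integral>x. (\<gamma> x)\<^sup>2 * (d x)\<^sup>2 \<partial>M)"
    unfolding split using int_a int_b int_c
    by (simp only: Bochner_Integration.integral_diff Bochner_Integration.integral_add
        Bochner_Integration.integral_mult_right Bochner_Integration.integrable_add
        Bochner_Integration.integrable_mult_right)
  also have "\<dots> = (\<integral>x. (\<gamma> x)\<^sup>2 * \<sigma> x \<partial>M) + (\<integral>x. (\<gamma> x)\<^sup>2 * (d x)\<^sup>2 \<partial>M)"
    using a(2) b(2) by (simp add: power2_eq_square mult.assoc)
  also have "\<dots> = (\<integral>x. (\<gamma> x)\<^sup>2 * ((d x)\<^sup>2 + \<sigma> x) \<partial>M)"
    using a(1) int_c by (simp add: distrib_left)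
  finally show "(\<integral>x. (\<gamma> x * g x)\<^sup>2 \<partial>M) = (\<integral>x. (\<gamma> x)\<^sup>2 * ((d x)\<^sup>2 + \<sigma> x) \<partial>M)" .
qed

end

section \<open>Variance-adapted stochastic gradient descent\<close>

locale vadapt_sgd = prob_space M
  for M :: "'a measure" +
  fixes f :: "real^'n \<Rightarrow> real" and Df :: "real^'n \<Rightarrow> real^'n"
    and \<mu> L cv Mv fstar :: real and \<theta>0 :: "real^'n"
    and \<theta> g \<sigma>2 :: "nat \<Rightarrow> 'a \<Rightarrow> real^'n"
  assumes grad: "\<And>x. (f has_derivative (\<lambda>h. Df x \<bullet> h)) (at x)"
    and mu_pos: "\<mu> > 0"
    and sconv: "strongly_convex \<mu> f"
    and L_pos: "L > 0"
    and smooth: "\<And>x y. norm (Df x - Df y) \<le> L * norm (x - y)"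
    and fstar: "fstar = (INF x. f x)"
    and init: "\<And>\<omega>. \<theta> 0 \<omega> = \<theta>0"
    and step: "\<And>t \<omega>. \<theta> (Suc t) \<omega> =
        \<theta> t \<omega> - (1 / L) *\<^sub>R (\<chi> i. vadapt (Df (\<theta> t \<omega>) $ i) (\<sigma>2 t \<omega> $ i) * g t \<omega> $ i)"
    and g_meas [measurable]: "\<And>t. g t \<in> borel_measurable M"
    and g_sq_int: "\<And>t i. integrable M (\<lambda>\<omega>. (g t \<omega> $ i)\<^sup>2)"
    and unbiased: "\<And>t i. AE \<omega> in M.
        real_cond_exp M (hist_alg M \<theta> t) (\<lambda>\<omega>. g t \<omega> $ i) \<omega> = Df (\<theta> t \<omega>) $ i"
    and sigma_meas [measurable]: "\<And>t. \<sigma>2 t \<in> borel_measurable (hist_alg M \<theta> t)"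
    and sigma_var: "\<And>t i. AE \<omega> in M. \<sigma>2 t \<omega> $ i =
        real_cond_exp M (hist_alg M \<theta> t) (\<lambda>\<omega>. (g t \<omega> $ i - Df (\<theta> t \<omega>) $ i)\<^sup>2) \<omega>"
    and cv_nonneg: "cv \<ge> 0" and Mv_nonneg: "Mv \<ge> 0"
    and var_bound: "\<And>t. AE \<omega> in M. (\<Sum>i\<in>UNIV. \<sigma>2 t \<omega> $ i) \<le> cv * (norm (Df (\<theta> t \<omega>)))\<^sup>2 + Mv"
begin

definition \<gamma> :: "nat \<Rightarrow> 'a \<Rightarrow> 'n \<Rightarrow> real" where
  "\<gamma> t \<omega> i = vadapt (Df (\<theta> t \<omega>) $ i) (\<sigma>2 t \<omega> $ i)"

definition gain :: "nat \<Rightarrow> 'a \<Rightarrow> real" where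
  "gain t \<omega> = (\<Sum>i\<in>UNIV. \<gamma> t \<omega> i * (Df (\<theta> t \<omega>) $ i)\<^sup>2)"

definition gap :: "nat \<Rightarrow> real" where
  "gap t = (\<integral>\<omega>. f (\<theta> t \<omega>) - fstar \<partial>M)"

lemma step_\<gamma>: "\<theta> (Suc t) \<omega> = \<theta> t \<omega> - (1 / L) *\<^sub>R (\<chi> i. \<gamma> t \<omega> i * g t \<omega> $ i)"
  unfolding \<gamma>_def by (rule step)

lemma borel_measurable_Df [measurable]: "Df \<in> borel_measurable borel"
proof -
  have "L-lipschitz_on UNIV Df"
    by (rule lipschitz_onI) (use smooth L_pos in \<open>auto simp: dist_norm\<close>)
  then show ?thesis
    by (intro borel_measurable_continuous_onI lipschitz_on_continuous_on)
qed

lemma borel_measurable_f [measurable]: "f \<in> borel_measurable borel"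
  using grad has_derivative_continuous
  by (intro borel_measurable_continuous_onI continuous_at_imp_continuous_on) blast

lemma borel_measurable_\<gamma>:
  assumes [measurable]: "\<theta> t \<in> borel_measurable N" "\<sigma>2 t \<in> borel_measurable N"
  shows "(\<lambda>\<omega>. \<gamma> t \<omega> i) \<in> borel_measurable N"
  unfolding \<gamma>_def vadapt_eq_divide by measurable

lemma borel_measurable_iterate [measurable]: "\<theta> t \<in> borel_measurable M"
proof -
  have "\<forall>s\<le>t. \<theta> s \<in> borel_measurable M"
  proof (induction t)
    case 0
    have "\<theta> 0 = (\<lambda>\<omega>. \<theta>0)" using init by (intro ext) simp
    then show ?case by simp
  next
    case (Suc t)
    then have [measurable]: "\<theta> t \<in> borel_measurable M" by simp
    have [measurable]: "\<sigma>2 t \<in> borel_measurable M"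
      using Suc by (intro measurable_from_subalg[OF subalgebra_hist_alg sigma_meas]) simp
    have [measurable]: "(\<lambda>\<omega>. \<gamma> t \<omega> i) \<in> borel_measurable M" for i
      by (rule borel_measurable_\<gamma>) measurable
    have "(\<lambda>\<omega>. \<chi> i. \<gamma> t \<omega> i * g t \<omega> $ i) \<in> borel_measurable M"
      by (intro borel_measurable_vec_lambda) measurable
    then have "\<theta> (Suc t) \<in> borel_measurable M" unfolding step_\<gamma> by measurable
    then show ?case using Suc by (auto simp: le_Suc_eq)
  qed
  then show ?thesis by simp
qed

lemma sigma_finite_subalgebra_history: "sigma_finite_subalgebra M (hist_alg M \<theta> t)"
  by (intro finite_measure_subalgebra_is_sigma_finite finite_measure_subalgebra.intro
      finite_measure_subalgebra_axioms.intro subalgebra_hist_alg borel_measurable_iterate)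
    unfold_locales

lemma borel_measurable_iterate_history [measurable]: "\<theta> t \<in> borel_measurable (hist_alg M \<theta> t)"
  by (rule measurable_hist_alg) simp

lemma borel_measurable_variance [measurable]: "\<sigma>2 t \<in> borel_measurable M"
  by (intro measurable_from_subalg[OF subalgebra_hist_alg sigma_meas] borel_measurable_iterate)

lemma variance_nonneg: "AE \<omega> in M. \<forall>t i. 0 \<le> \<sigma>2 t \<omega> $ i"
proof -
  have "AE \<omega> in M. 0 \<le> \<sigma>2 t \<omega> $ i" for t i
  proof -
    interpret sigma_finite_subalgebra M "hist_alg M \<theta> t" by (rule sigma_finite_subalgebra_history)
    have "AE \<omega> in M. 0 \<le> real_cond_exp M (hist_alg M \<theta> t) (\<lambda>\<omega>. (g t \<omega> $ i - Df (\<theta> t \<omega>) $ i)\<^sup>2) \<omega>"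
      by (rule real_cond_exp_pos) (simp, measurable)
    with sigma_var[of t i] show ?thesis by eventually_elim simp
  qed
  then show ?thesis by (simp add: AE_all_countable)
qed

lemma \<gamma>_bounds: "AE \<omega> in M. \<forall>t i. 0 \<le> \<gamma> t \<omega> i \<and> \<gamma> t \<omega> i \<le> 1"
  using variance_nonneg by eventually_elim (simp add: \<gamma>_def vadapt_nonneg vadapt_le_one)

lemma fstar_le: "fstar \<le> f x"
  unfolding fstar by (rule cINF_lower[OF strongly_convex_bdd_below[OF grad sconv mu_pos]]) simp

lemma gap_nonneg: "0 \<le> gap t"
  unfolding gap_def using fstar_le by (intro integral_nonneg_AE AE_I2) simp

lemma integrable_iterate_norm_sq: "integrable M (\<lambda>\<omega>. (norm (\<theta> t \<omega>))\<^sup>2)"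
proof (induction t)
  case 0
  then show ?case using init by simp
next
  case (Suc t)
  define G where "G \<omega> = (\<Sum>i\<in>UNIV. (g t \<omega> $ i)\<^sup>2)" for \<omega>
  define v where "v \<omega> = (1 / L) *\<^sub>R (\<chi> i. \<gamma> t \<omega> i * g t \<omega> $ i)" for \<omega>
  have bound: "AE \<omega> in M. (norm (\<theta> (Suc t) \<omega>))\<^sup>2 \<le> 2 * (norm (\<theta> t \<omega>))\<^sup>2 + 2 * (G \<omega> / L\<^sup>2)"
    using \<gamma>_bounds
  proof eventually_elim
    case (elim \<omega>)
    have "(norm (\<chi> i. \<gamma> t \<omega> i * g t \<omega> $ i))\<^sup>2 \<le> G \<omega>"
      unfolding norm_vec_sq G_def using elim
      by (intro sum_mono) (simp add: power_mult_distrib mult_left_le_one_le power_le_one)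
    then have "(norm (v \<omega>))\<^sup>2 \<le> G \<omega> / L\<^sup>2"
      using L_pos by (simp add: v_def power_divide divide_right_mono)
    moreover have "(norm (\<theta> (Suc t) \<omega>))\<^sup>2 \<le> 2 * (norm (\<theta> t \<omega>))\<^sup>2 + 2 * (norm (v \<omega>))\<^sup>2"
      unfolding step_\<gamma> v_def[symmetric] by (intro power2_le_twice_sum_squares norm_ge_zero norm_triangle_ineq4)
    ultimately show ?case by linarith
  qed
  show ?case
  proof (rule Bochner_Integration.integrable_bound)
    show "integrable M (\<lambda>\<omega>. 2 * (norm (\<theta> t \<omega>))\<^sup>2 + 2 * (G \<omega> / L\<^sup>2))"
      using Suc g_sq_int by (simp add: G_def)
    show "AE \<omega> in M. norm ((norm (\<theta> (Suc t) \<omega>))\<^sup>2) \<le> norm (2 * (norm (\<theta> t \<omega>))\<^sup>2 + 2 * (G \<omega> / L\<^sup>2))"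
      using bound by eventually_elim (simp add: order_trans[OF _ abs_ge_self])
  qed measurable
qed

lemma integrable_grad_sq: "integrable M (\<lambda>\<omega>. (Df (\<theta> t \<omega>) $ i)\<^sup>2)"
proof (rule Bochner_Integration.integrable_bound)
  show "integrable M (\<lambda>\<omega>. 2 * (norm (Df 0))\<^sup>2 + 2 * (L * norm (\<theta> t \<omega>))\<^sup>2)"
    using integrable_iterate_norm_sq[of t] by (simp add: power_mult_distrib)
  show "AE \<omega> in M. norm ((Df (\<theta> t \<omega>) $ i)\<^sup>2) \<le> norm (2 * (norm (Df 0))\<^sup>2 + 2 * (L * norm (\<theta> t \<omega>))\<^sup>2)"
  proof (intro AE_I2)
    fix \<omega>
    have "\<bar>Df (\<theta> t \<omega>) $ i\<bar> \<le> norm (Df 0) + L * norm (\<theta> t \<omega>)"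
      using component_le_norm_cart[of "Df (\<theta> t \<omega>)" i] smooth[of "\<theta> t \<omega>" 0]
        norm_triangle_ineq2[of "Df (\<theta> t \<omega>)" "Df 0"] by simp
    from power2_le_twice_sum_squares[OF abs_ge_zero this]
    show "norm ((Df (\<theta> t \<omega>) $ i)\<^sup>2) \<le> norm (2 * (norm (Df 0))\<^sup>2 + 2 * (L * norm (\<theta> t \<omega>))\<^sup>2)"
      by simp
  qed
qed measurable

lemma integrable_gap: "integrable M (\<lambda>\<omega>. f (\<theta> t \<omega>) - fstar)"
proof (rule Bochner_Integration.integrable_bound)
  define A where "A = f 0 - fstar + (norm (Df 0))\<^sup>2"
  show "integrable M (\<lambda>\<omega>. A + (L / 2 + 1) * (norm (\<theta> t \<omega>))\<^sup>2)"
    using integrable_iterate_norm_sq[of t] by simp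
  show "AE \<omega> in M. norm (f (\<theta> t \<omega>) - fstar) \<le> norm (A + (L / 2 + 1) * (norm (\<theta> t \<omega>))\<^sup>2)"
  proof (intro AE_I2)
    fix \<omega>
    have "f (\<theta> t \<omega>) - fstar \<le> A + (L / 2 + 1) * (norm (\<theta> t \<omega>))\<^sup>2"
      using lipschitz_gradient_quadratic_growth[OF grad smooth, of "\<theta> t \<omega>"] by (simp add: A_def)
    then show "norm (f (\<theta> t \<omega>) - fstar) \<le> norm (A + (L / 2 + 1) * (norm (\<theta> t \<omega>))\<^sup>2)"
      using fstar_le[of "\<theta> t \<omega>"] by simp
  qed
qed measurable

lemma coordinate_moments:
  shows "integrable M (\<lambda>\<omega>. \<gamma> t \<omega> i * (Df (\<theta> t \<omega>) $ i)\<^sup>2)"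
    and "integrable M (\<lambda>\<omega>. \<gamma> t \<omega> i * Df (\<theta> t \<omega>) $ i * g t \<omega> $ i)"
    and "(\<integral>\<omega>. \<gamma> t \<omega> i * Df (\<theta> t \<omega>) $ i * g t \<omega> $ i \<partial>M) = (\<integral>\<omega>. \<gamma> t \<omega> i * (Df (\<theta> t \<omega>) $ i)\<^sup>2 \<partial>M)"
    and "integrable M (\<lambda>\<omega>. (\<gamma> t \<omega> i * g t \<omega> $ i)\<^sup>2)"
    and "(\<integral>\<omega>. (\<gamma> t \<omega> i * g t \<omega> $ i)\<^sup>2 \<partial>M) = (\<integral>\<omega>. \<gamma> t \<omega> i * (Df (\<theta> t \<omega>) $ i)\<^sup>2 \<partial>M)"
proof -
  interpret sigma_finite_subalgebra M "hist_alg M \<theta> t" by (rule sigma_finite_subalgebra_history)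
  have [measurable]: "(\<lambda>\<omega>. \<gamma> t \<omega> i) \<in> borel_measurable (hist_alg M \<theta> t)"
      "(\<lambda>\<omega>. \<gamma> t \<omega> i) \<in> borel_measurable M"
    by (rule borel_measurable_\<gamma>, measurable)+
  have \<gamma>: "AE \<omega> in M. \<bar>\<gamma> t \<omega> i\<bar> \<le> 1"
    using \<gamma>_bounds by eventually_elim auto
  show "integrable M (\<lambda>\<omega>. \<gamma> t \<omega> i * (Df (\<theta> t \<omega>) $ i)\<^sup>2)"
    by (rule integrable_mult_bounded[OF integrable_grad_sq _ \<gamma>]) measurable
  have "integrable M (\<lambda>\<omega>. \<gamma> t \<omega> i * (Df (\<theta> t \<omega>) $ i * g t \<omega> $ i))"
    by (intro integrable_mult_bounded[OF _ _ \<gamma>] integrable_mult_of_square_integrable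
        integrable_grad_sq g_sq_int) measurable
  then show int: "integrable M (\<lambda>\<omega>. \<gamma> t \<omega> i * Df (\<theta> t \<omega>) $ i * g t \<omega> $ i)"
    by (simp add: mult.assoc)
  show "(\<integral>\<omega>. \<gamma> t \<omega> i * Df (\<theta> t \<omega>) $ i * g t \<omega> $ i \<partial>M) = (\<integral>\<omega>. \<gamma> t \<omega> i * (Df (\<theta> t \<omega>) $ i)\<^sup>2 \<partial>M)"
    using integral_mult_cond_exp_unbiased(2)[where h = "\<lambda>\<omega>. \<gamma> t \<omega> i * Df (\<theta> t \<omega>) $ i", OF _ _ _ int unbiased]
    by (simp add: power2_eq_square mult.assoc)
  note moments = second_moment_cond_exp[OF _ _ _ _ \<gamma> g_sq_int integrable_grad_sq unbiased sigma_var]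
  show "integrable M (\<lambda>\<omega>. (\<gamma> t \<omega> i * g t \<omega> $ i)\<^sup>2)"
    by (rule moments(1)) measurable
  have "(\<integral>\<omega>. (\<gamma> t \<omega> i * g t \<omega> $ i)\<^sup>2 \<partial>M) = (\<integral>\<omega>. (\<gamma> t \<omega> i)\<^sup>2 * ((Df (\<theta> t \<omega>) $ i)\<^sup>2 + \<sigma>2 t \<omega> $ i) \<partial>M)"
    by (rule moments(2)) measurable
  also have "\<dots> = (\<integral>\<omega>. \<gamma> t \<omega> i * (Df (\<theta> t \<omega>) $ i)\<^sup>2 \<partial>M)"
    unfolding \<gamma>_def vadapt_sq_mult ..
  finally show "(\<integral>\<omega>. (\<gamma> t \<omega> i * g t \<omega> $ i)\<^sup>2 \<partial>M) = (\<integral>\<omega>. \<gamma> t \<omega> i * (Df (\<theta> t \<omega>) $ i)\<^sup>2 \<partial>M)" .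
qed

lemma integrable_gain: "integrable M (gain t)"
  unfolding gain_def using coordinate_moments(1) by simp

lemma expected_descent: "gap (Suc t) \<le> gap t - (\<integral>\<omega>. gain t \<omega> \<partial>M) / (2 * L)"
proof -
  define d where "d \<omega> = (\<Sum>i\<in>UNIV. \<gamma> t \<omega> i * Df (\<theta> t \<omega>) $ i * g t \<omega> $ i)" for \<omega>
  define q where "q \<omega> = (\<Sum>i\<in>UNIV. (\<gamma> t \<omega> i * g t \<omega> $ i)\<^sup>2)" for \<omega>
  have pointwise: "f (\<theta> (Suc t) \<omega>) - fstar \<le> (f (\<theta> t \<omega>) - fstar) - d \<omega> / L + q \<omega> / (2 * L)" for \<omega>
  proof -
    have "Df (\<theta> t \<omega>) \<bullet> (\<chi> i. \<gamma> t \<omega> i * g t \<omega> $ i) = d \<omega>"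
      by (simp add: d_def inner_vec_def algebra_simps)
    moreover have "(norm (\<chi> i. \<gamma> t \<omega> i * g t \<omega> $ i))\<^sup>2 = q \<omega>"
      by (simp add: q_def norm_vec_sq)
    moreover have "f (\<theta> (Suc t) \<omega>) \<le> f (\<theta> t \<omega>) - Df (\<theta> t \<omega>) \<bullet> (\<chi> i. \<gamma> t \<omega> i * g t \<omega> $ i) / L
        + (norm (\<chi> i. \<gamma> t \<omega> i * g t \<omega> $ i))\<^sup>2 / (2 * L)"
      unfolding step_\<gamma> by (rule gradient_step_upper_bound[OF grad smooth L_pos])
    ultimately show ?thesis by simp
  qed
  have int_d: "integrable M d" and int_q: "integrable M q"
    unfolding d_def q_def using coordinate_moments(2,4) by simp_all
  have "gap (Suc t) \<le> (\<integral>\<omega>. (f (\<theta> t \<omega>) - fstar) - d \<omega> / L + q \<omega> / (2 * L) \<partial>M)"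
    unfolding gap_def using integrable_gap int_d int_q pointwise by (intro integral_mono) simp_all
  also have "\<dots> = gap t - (\<integral>\<omega>. d \<omega> \<partial>M) / L + (\<integral>\<omega>. q \<omega> \<partial>M) / (2 * L)"
    unfolding gap_def using integrable_gap int_d int_q by simp
  finally have "gap (Suc t) \<le> gap t - (\<integral>\<omega>. d \<omega> \<partial>M) / L + (\<integral>\<omega>. q \<omega> \<partial>M) / (2 * L)" .
  moreover have "(\<integral>\<omega>. d \<omega> \<partial>M) = (\<integral>\<omega>. gain t \<omega> \<partial>M)" "(\<integral>\<omega>. q \<omega> \<partial>M) = (\<integral>\<omega>. gain t \<omega> \<partial>M)"
    unfolding d_def q_def gain_def using coordinate_moments by simp_all
  ultimately show ?thesis by (simp add: field_simps)
qed

lemma expected_gain_lower_bound: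
  assumes "0 \<le> l" "l * (1 + cv) \<le> 1"
  shows "2 * l * \<mu> * gap t - l\<^sup>2 * Mv \<le> (\<integral>\<omega>. gain t \<omega> \<partial>M)"
proof -
  have "AE \<omega> in M. 2 * l * \<mu> * (f (\<theta> t \<omega>) - fstar) - l\<^sup>2 * Mv \<le> gain t \<omega>"
    using variance_nonneg var_bound[of t]
  proof eventually_elim
    case (elim \<omega>)
    have "2 * \<mu> * (f (\<theta> t \<omega>) - fstar) \<le> (norm (Df (\<theta> t \<omega>)))\<^sup>2"
      using strongly_convex_Polyak_Lojasiewicz[OF grad sconv mu_pos, of "\<theta> t \<omega>"] mu_pos
      unfolding fstar by (simp add: field_simps)
    then have "l * (2 * \<mu> * (f (\<theta> t \<omega>) - fstar)) \<le> l * (norm (Df (\<theta> t \<omega>)))\<^sup>2"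
      using assms(1) by (rule mult_left_mono)
    moreover have "l * (norm (Df (\<theta> t \<omega>)))\<^sup>2 - l\<^sup>2 * Mv \<le> gain t \<omega>"
      unfolding gain_def \<gamma>_def using elim assms by (intro sum_vadapt_lower_bound) auto
    ultimately show ?case by (simp add: algebra_simps)
  qed
  then have "(\<integral>\<omega>. 2 * l * \<mu> * (f (\<theta> t \<omega>) - fstar) - l\<^sup>2 * Mv \<partial>M) \<le> (\<integral>\<omega>. gain t \<omega> \<partial>M)"
    using integrable_gap integrable_gain by (intro integral_mono_AE) auto
  then show ?thesis
    using integrable_gap by (simp add: gap_def prob_space)
qed

lemma gap_recursion:
  assumes "0 \<le> l" "l \<le> 1 / (1 + cv)"
  shows "gap (Suc t) \<le> (1 - \<mu> / L * l) * gap t + Mv / (2 * L) * l\<^sup>2"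
proof -
  have "l * (1 + cv) \<le> 1" using assms cv_nonneg by (simp add: le_divide_eq)
  from expected_gain_lower_bound[OF assms(1) this, of t]
  have "(2 * l * \<mu> * gap t - l\<^sup>2 * Mv) / (2 * L) \<le> (\<integral>\<omega>. gain t \<omega> \<partial>M) / (2 * L)"
    using L_pos by (simp add: divide_right_mono)
  moreover have "gap t - (2 * l * \<mu> * gap t - l\<^sup>2 * Mv) / (2 * L) = (1 - \<mu> / L * l) * gap t + Mv / (2 * L) * l\<^sup>2"
    using L_pos by (simp add: field_simps)
  ultimately show ?thesis using expected_descent[of t] by linarith
qed

lemma gap_bigo: "gap \<in> O(\<lambda>t. 1 / real t)"
  using gap_nonneg mu_pos L_pos Mv_nonneg cv_nonneg gap_recursion
  by (intro contraction_recursion_bigo[where c = "\<mu> / L" and K = "Mv / (2 * L)" and lmax = "1 / (1 + cv)"])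
    simp_all

end

theorem theorem1:
  fixes M :: "'a measure"
    and f :: "real^'n \<Rightarrow> real"
    and Df :: "real^'n \<Rightarrow> real^'n"
    and \<mu> L cv Mv fstar :: real
    and \<theta>0 :: "real^'n"
    and \<theta> g \<sigma>2 :: "nat \<Rightarrow> 'a \<Rightarrow> real^'n"
  assumes prob: "prob_space M"
    and grad: "\<And>x. (f has_derivative (\<lambda>h. Df x \<bullet> h)) (at x)"
    and mu_pos: "\<mu> > 0"
    and sconv: "strongly_convex \<mu> f"
    and L_pos: "L > 0"
    and smooth: "\<And>x y. norm (Df x - Df y) \<le> L * norm (x - y)"
    and fstar: "fstar = (INF x. f x)"
    and init: "\<And>\<omega>. \<theta> 0 \<omega> = \<theta>0"
    and step: "\<And>t \<omega>. \<theta> (Suc t) \<omega> =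
        \<theta> t \<omega> - (1 / L) *\<^sub>R (\<chi> i. vadapt (Df (\<theta> t \<omega>) $ i) (\<sigma>2 t \<omega> $ i) * g t \<omega> $ i)"
    and g_meas: "\<And>t. g t \<in> borel_measurable M"
    and g_sq_int: "\<And>t i. integrable M (\<lambda>\<omega>. (g t \<omega> $ i)\<^sup>2)"
    and unbiased: "\<And>t i. AE \<omega> in M.
        real_cond_exp M (hist_alg M \<theta> t) (\<lambda>\<omega>. g t \<omega> $ i) \<omega> = Df (\<theta> t \<omega>) $ i"
    and sigma_meas: "\<And>t. \<sigma>2 t \<in> borel_measurable (hist_alg M \<theta> t)"
    and sigma_var: "\<And>t i. AE \<omega> in M. \<sigma>2 t \<omega> $ i =
        real_cond_exp M (hist_alg M \<theta> t) (\<lambda>\<omega>. (g t \<omega> $ i - Df (\<theta> t \<omega>) $ i)\<^sup>2) \<omega>"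
    and cv_pos: "cv > 0" and Mv_pos: "Mv > 0"
    and var_bound: "\<And>t. AE \<omega> in M. (\<Sum>i\<in>UNIV. \<sigma>2 t \<omega> $ i) \<le> cv * (norm (Df (\<theta> t \<omega>)))\<^sup>2 + Mv"
  shows "(\<forall>t. integrable M (\<lambda>\<omega>. f (\<theta> t \<omega>) - fstar)) \<and>
         (\<lambda>t. LINT \<omega>|M. f (\<theta> t \<omega>) - fstar) \<in> O(\<lambda>t. 1 / real t)"
proof -
  interpret vadapt_sgd M f Df \<mu> L cv Mv fstar \<theta>0 \<theta> g \<sigma>2
    using assms by (auto simp: vadapt_sgd_def vadapt_sgd_axioms_def)
  show ?thesis
    using integrable_gap gap_bigo unfolding gap_def by simp
qed

end
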